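(* Assume (A1)–(A4), let $\{\lambda^k\}$ be generated by SLPMM with parameters $\sigma,\alpha>0$, and let $s>0$ be an integer. Set $\beta_0:=\nu_g+\sqrt p\,\kappa_gR$ and $$\vartheta(\sigma,\alpha,s):=\frac{\varepsilon_0\sigma s}{2}+\sigma\beta_0(s-1)+\frac{\alpha R^2}{\varepsilon_0 s}+\frac{2\kappa_fR}{\varepsilon_0}+\frac{\sigma\nu_g^2}{\varepsilon_0}.$$ Then for all $k\ge0$: $\big|\|\lambda^{k+1}\|-\|\lambda^k\|\big|\le\sigma\beta_0$, and almost surely $$\mathbb E\big[\|\lambda^{k+s}\|-\|\lambda^k\|\,\big|\,\mathcal F_k\big]\le\begin{cases} s\sigma\beta_0, & \text{if }\|\lambda^k\|<\vartheta(\sigma,\alpha,s),\\[2pt] -s\,\dfrac{\sigma\varepsilon_0}{2}, & \text{if }\|\lambda^k\|\ge\vartheta(\sigma,\alpha,s).\end{cases}$$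
   Context: Let $\mathcal C\subset\mathbb R^n$ be a nonempty compact convex set. Let $\xi$ be a random vector whose distribution is supported on $\Xi\subseteq\mathbb R^q$, and let $F:\mathcal C\times\Xi\to\mathbb R$ and $G_i:\mathcal C\times\Xi\to\mathbb R$ ($i=1,\dots,p$) be such that $F(\cdot,\xi)$, $G_i(\cdot,\xi)$ are convex and continuous on $\mathcal C$ for every $\xi$, and $f(x):=\mathbb E[F(x,\xi)]$, $g_i(x):=\mathbb E[G_i(x,\xi)]$ are finite on $\mathcal C$. Write $G=(G_1,\dots,G_p)^T$. Stochastic subgradients: $v_0(x,\xi)\in\partial_xF(x,\xi)$, $v_i(x,\xi)\in\partial_xG_i(x,\xi)$. $[t]_+=\max\{t,0\}$, $[t]_+^2=(\max\{t,0\})^2$. SLPMM: fix $\sigma,\alpha>0$, $x^0\in\mathcal C$, $\lambda^0=0\in\mathbb R^p$, i.i.d. copies $\xi^0,\xi^1,\dots$ of $\xi$. For $k\ge0$, $x^{k+1}=\arg\min_{x\in\mathcal C}\{\mathcal L^k_\sigma(x,\lambda^k)+\frac{\alpha}{2}\|x-x^k\|^2\}$ with $\mathcal L^k_\sigma(x,\lambda):=F(x^k,\xi^k)+\langle v_0(x^k,\xi^k),x-x^k\rangle+\frac{1}{2\sigma}[\sum_{i=1}^p[\lambda_i+\sigma(G_i(x^k,\xi^k)+\langle v_i(x^k,\xi^k),x-x^k\rangle)]_+^2-\|\lambda\|^2]$, and $\lambda_i^{k+1}=[\lambda_i^k+\sigma(G_i(x^k,\xi^k)+\langle v_i(x^k,\xi^k),x^{k+1}-x^k\rangle)]_+$.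 $\mathcal F_k$ is the $\sigma$-algebra generated by $\xi^0,\dots,\xi^{k-1}$. Assumptions: (A1) $\|x'-x''\|\le R$ on $\mathcal C$. (A2) $\|G(x,\xi)\|\le\nu_g$ for all $x\in\mathcal C,\xi\in\Xi$. (A3) $\|v_0(x,\xi)\|\le\kappa_f$, $\|v_i(x,\xi)\|\le\kappa_g$ for all $x,\xi$. (A4) (Slater) there exist $\varepsilon_0>0$ and $\hat x\in\mathcal C$ with $g_i(\hat x)\le-\varepsilon_0$ for all $i$. *)

theory Defs
  imports "HOL-Probability.Probability"
begin

text \<open>Subdifferential of a function defined on the set C (the function is regarded
  as +infinity outside C): the usual convex-analysis subdifferential.\<close>
definition subdiff_on :: "('a::real_inner) set \<Rightarrow> ('a \<Rightarrow> real) \<Rightarrow> 'a \<Rightarrow> 'a set" where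
  "subdiff_on C h x = {u. \<forall>y\<in>C. h y \<ge> h x + inner u (y - x)}"

definition gen_filtration ::
  "'w measure \<Rightarrow> 'b measure \<Rightarrow> (nat \<Rightarrow> 'w \<Rightarrow> 'b) \<Rightarrow> nat \<Rightarrow> 'w measure" where
  "gen_filtration M N xi k =
     sigma (space M) (\<Union>i\<in>{..<k}. {xi i -` A \<inter> space M | A. A \<in> sets N})"

definition pos :: "real \<Rightarrow> real" where "pos t = max t 0"

text \<open>Linearized stochastic augmented Lagrangian L^k_sigma(x, lam), where
  xk = x^k, Fk = F(x^k,xi^k), Gk = G(x^k,xi^k), v0k = v_0(x^k,xi^k), vk i = v_i(x^k,xi^k).\<close>
definition slpmm_L ::
  "real \<Rightarrow> real^'n \<Rightarrow> real \<Rightarrow> real^'m \<Rightarrow> real^'n \<Rightarrow> ('m \<Rightarrow> real^'n)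
     \<Rightarrow> real^'n \<Rightarrow> real^'m \<Rightarrow> real" where
  "slpmm_L \<sigma> xk Fk Gk v0k vk x lam =
     Fk + inner v0k (x - xk)
     + (1 / (2 * \<sigma>)) * ((\<Sum>i\<in>UNIV. (pos (lam $ i + \<sigma> * (Gk $ i + inner (vk i) (x - xk))))\<^sup>2)
                        - (norm lam)\<^sup>2)"

end

theory Submission
  imports Defs
begin

text \<open>
  Each coordinate of the multiplier moves by at most \<open>\<sigma>\<close> times a linearized constraint value,
  and these values form a vector of norm at most \<open>\<beta>0\<close>; this gives the increment bound and,
  summed over \<open>s\<close> steps, the bound below the threshold.
  Above the threshold, the three-point inequality of the proximal step, tested at the Slater
  point \<open>xhat\<close>, bounds \<open>\<parallel>\<lambda>(k+1)\<parallel>\<^sup>2\<close> by \<open>\<parallel>\<lambda>(k)\<parallel>\<^sup>2 + 2\<sigma> \<langle>\<lambda>(k), G xhat \<xi>(k)\<rangle>\<close> plus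
  constants and a telescoping distance term. As \<open>\<xi>(k+t)\<close> is independent of the past, Slater's
  condition makes each cross term at most \<open>-2\<sigma>\<epsilon>0 \<parallel>\<lambda>(k+t)\<parallel>\<^sub>1\<close> in mean, so \<open>\<parallel>\<lambda>(k+s)\<parallel>\<^sup>2\<close> has
  conditional mean below an \<open>F\<^sub>k\<close>-measurable quantity that is at most \<open>(\<parallel>\<lambda>(k)\<parallel> - s\<sigma>\<epsilon>0/2)\<^sup>2\<close>
  above the threshold. Instead of a conditional Jensen inequality, the square root is taken by
  AM-GM against an \<open>F\<^sub>k\<close>-measurable weight.
\<close>

section \<open>Elementary inequalities and convexity\<close>

lemma pos_nonneg: "0 \<le> pos t"
  by (simp add: pos_def)

lemma pos_mono: "a \<le> b \<Longrightarrow> pos a \<le> pos b"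
  by (simp add: pos_def)

lemma pos_le_abs: "pos t \<le> \<bar>t\<bar>"
  by (simp add: pos_def)

lemma abs_pos_add_sub_le: "0 \<le> a \<Longrightarrow> \<bar>pos (a + t) - a\<bar> \<le> \<bar>t\<bar>"
  by (simp add: pos_def max_def)

lemma convex_on_pos_square: "convex_on UNIV (\<lambda>t. (pos t)\<^sup>2)"
proof (rule convex_onI)
  fix t a b :: real assume t: "0 < t" "t < 1"
  have "pos ((1 - t) *\<^sub>R a + t *\<^sub>R b) \<le> (1 - t) * pos a + t * pos b"
  proof -
    have "(1 - t) * a + t * b \<le> (1 - t) * pos a + t * pos b"
      using t by (intro add_mono mult_left_mono) (auto simp: pos_def)
    then show ?thesis
      using t by (simp add: pos_def pos_nonneg)
  qed
  then have "(pos ((1 - t) *\<^sub>R a + t *\<^sub>R b))\<^sup>2 \<le> ((1 - t) * pos a + t * pos b)\<^sup>2"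
    by (intro power_mono) (auto simp: pos_nonneg)
  also have "\<dots> \<le> (1 - t) * (pos a)\<^sup>2 + t * (pos b)\<^sup>2"
    using convex_onD[OF convex_power2, of t "pos a" "pos b"] t by simp
  finally show "(pos ((1 - t) *\<^sub>R a + t *\<^sub>R b))\<^sup>2 \<le> (1 - t) * (pos a)\<^sup>2 + t * (pos b)\<^sup>2" .
qed simp

lemma norm_vec_pos_le:
  fixes a b :: "real^'m"
  assumes "\<And>i. a $ i \<le> b $ i"
  shows "norm (\<chi> i. pos (a $ i)) \<le> norm b"
proof (rule norm_le_componentwise_cart)
  fix i
  show "norm ((\<chi> i. pos (a $ i)) $ i) \<le> norm (b $ i)"
    using pos_mono[OF assms[of i]] pos_le_abs[of "b $ i"] by (simp add: pos_nonneg)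
qed

lemma norm_vec_pos_add_diff_le:
  fixes l d :: "real^'m"
  assumes "\<And>i. 0 \<le> l $ i"
  shows "norm ((\<chi> i. pos (l $ i + d $ i)) - l) \<le> norm d"
  by (rule norm_le_componentwise_cart) (simp add: abs_pos_add_sub_le assms)

lemma norm_le_sqrt_card_mult:
  fixes w :: "real^'m"
  assumes "\<And>i. \<bar>w $ i\<bar> \<le> c"
  shows "norm w \<le> sqrt (real CARD('m)) * c"
proof -
  have "norm w \<le> L2_set (\<lambda>i. c) (UNIV :: 'm set)"
    unfolding norm_vec_def by (intro L2_set_mono) (use assms in auto)
  also have "\<dots> = sqrt (real CARD('m)) * c"
    using assms[of undefined] by (simp add: L2_set_def real_sqrt_mult)
  finally show ?thesis .
qed

lemma convex_on_sum_fun: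
  assumes "convex S" "\<And>i. i \<in> I \<Longrightarrow> convex_on S (f i)"
  shows "convex_on S (\<lambda>y. \<Sum>i\<in>I. f i y)"
proof (cases "finite I")
  case True
  then show ?thesis
    using assms(2) by (induction I rule: finite_induct) (auto simp: convex_on_const assms(1))
qed (simp add: convex_on_const assms(1))

lemma convex_on_compose_affine:
  fixes f :: "'a::real_vector \<Rightarrow> real"
  assumes g: "convex_on UNIV g" and S: "convex S"
    and f: "\<And>x y t. f ((1 - t) *\<^sub>R x + t *\<^sub>R y) = (1 - t) * f x + t * f y"
  shows "convex_on S (\<lambda>y. g (f y))"
  using convex_onD[OF g] S by (intro convex_onI) (simp_all add: f)

lemma nonneg_if_nonneg_add_small_mult:
  fixes A B :: real
  assumes "\<And>t. 0 < t \<Longrightarrow> t \<le> 1 \<Longrightarrow> 0 \<le> A + t * B"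
  shows "0 \<le> A"
proof (rule ccontr)
  assume "\<not> 0 \<le> A"
  define t where "t = min 1 (- A / (2 * (\<bar>B\<bar> + 1)))"
  have t: "0 < t" "t \<le> 1"
    using \<open>\<not> 0 \<le> A\<close> by (auto simp: t_def divide_neg_pos)
  have "t * \<bar>B\<bar> \<le> - A / (2 * (\<bar>B\<bar> + 1)) * (\<bar>B\<bar> + 1)"
    using t by (intro mult_mono) (auto simp: t_def)
  also have "\<dots> = - A / 2"
    by (simp add: field_simps)
  finally have "A + t * B < 0"
    using \<open>\<not> 0 \<le> A\<close> abs_ge_self[of B] mult_left_mono[of B "\<bar>B\<bar>" t] t by linarith
  with assms[OF t] show False by simp
qed

lemma prox_three_point:
  fixes h :: "'a::real_inner \<Rightarrow> real"
  assumes h: "convex_on C h" and x1: "x1 \<in> C" and y: "y \<in> C"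
    and min: "\<And>z. z \<in> C \<Longrightarrow> h x1 + \<alpha> / 2 * (norm (x1 - xk))\<^sup>2 \<le> h z + \<alpha> / 2 * (norm (z - xk))\<^sup>2"
  shows "h x1 + \<alpha> / 2 * (norm (x1 - xk))\<^sup>2 + \<alpha> / 2 * (norm (y - x1))\<^sup>2
           \<le> h y + \<alpha> / 2 * (norm (y - xk))\<^sup>2"
proof -
  define I where "I = inner (x1 - xk) (y - x1)"
  have sq: "(norm (x1 - xk + t *\<^sub>R (y - x1)))\<^sup>2
      = (norm (x1 - xk))\<^sup>2 + 2 * t * I + t\<^sup>2 * (norm (y - x1))\<^sup>2" for t
    unfolding I_def power2_norm_eq_inner
    by (simp add: algebra_simps inner_commute power2_eq_square)
  \<comment> \<open>test minimality at the points of the segment from x1 to y and divide by t\<close>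
  have "0 \<le> (h y - h x1 + \<alpha> * I) + t * (\<alpha> / 2 * (norm (y - x1))\<^sup>2)"
    if t: "0 < t" "t \<le> 1" for t
  proof -
    define z where "z = (1 - t) *\<^sub>R x1 + t *\<^sub>R y"
    have zC: "z \<in> C"
      unfolding z_def using convex_on_imp_convex[OF h] x1 y t by (intro convexD) auto
    have hz: "h z \<le> (1 - t) * h x1 + t * h y"
      unfolding z_def using convex_onD[OF h] x1 y t by simp
    have zx: "z - xk = x1 - xk + t *\<^sub>R (y - x1)"
      unfolding z_def by (simp add: algebra_simps)
    have nz: "(norm (z - xk))\<^sup>2 = (norm (x1 - xk))\<^sup>2 + 2 * t * I + t\<^sup>2 * (norm (y - x1))\<^sup>2"
      unfolding zx by (rule sq)
    have "h x1 + \<alpha> / 2 * (norm (x1 - xk))\<^sup>2 \<le> (1 - t) * h x1 + t * h y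
        + \<alpha> / 2 * ((norm (x1 - xk))\<^sup>2 + 2 * t * I + t\<^sup>2 * (norm (y - x1))\<^sup>2)"
      using min[OF zC] hz unfolding nz by linarith
    then have "0 \<le> t * (h y - h x1) + \<alpha> * t * I + \<alpha> / 2 * t\<^sup>2 * (norm (y - x1))\<^sup>2"
      by (simp add: algebra_simps)
    also have "\<dots> = t * ((h y - h x1 + \<alpha> * I) + t * (\<alpha> / 2 * (norm (y - x1))\<^sup>2))"
      by (simp add: algebra_simps power2_eq_square)
    finally show ?thesis
      using t by (simp add: zero_le_mult_iff)
  qed
  then have "0 \<le> h y - h x1 + \<alpha> * I"
    by (rule nonneg_if_nonneg_add_small_mult)
  moreover have "(norm (y - xk))\<^sup>2 = (norm (x1 - xk))\<^sup>2 + 2 * I + (norm (y - x1))\<^sup>2"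
    using sq[of 1] by simp
  ultimately show ?thesis
    by (simp add: algebra_simps)
qed

lemma sub_le_square_gap_div:
  fixes Y L \<delta> Q :: real
  assumes "0 < \<delta>" "\<delta> \<le> L" "0 \<le> Y" "Q \<le> (L - \<delta>)\<^sup>2 - 3 * \<delta>\<^sup>2"
  shows "Y - (L - \<delta>) \<le> (Y\<^sup>2 - Q) / (2 * max (L - \<delta>) \<delta>)"
proof -
  define c where "c = max (L - \<delta>) \<delta>"
  have "Q + c\<^sup>2 \<le> 2 * c * (L - \<delta>)"
  proof (cases "\<delta> \<le> L - \<delta>")
    case True
    then have c: "c = L - \<delta>"
      by (simp add: c_def)
    then have "Q \<le> c\<^sup>2"
      using assms(4) zero_le_power2[of \<delta>] unfolding c by linarith
    moreover have "2 * c * (L - \<delta>) = c\<^sup>2 + c\<^sup>2"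
      by (simp add: c power2_eq_square)
    ultimately show ?thesis
      by linarith
  next
    case False
    then have "(L - \<delta>)\<^sup>2 \<le> \<delta>\<^sup>2"
      using assms(2) by (intro power_mono) auto
    moreover have c: "c = \<delta>"
      using False by (simp add: c_def)
    moreover have "0 \<le> 2 * \<delta> * (L - \<delta>)"
      using assms(1,2) by simp
    ultimately show ?thesis
      using assms(4) zero_le_power2[of \<delta>] unfolding c by linarith
  qed
  moreover have "2 * c * Y \<le> Y\<^sup>2 + c\<^sup>2"
    using zero_le_power2[of "Y - c"] by (simp add: power2_eq_square algebra_simps)
  ultimately have "2 * c * (Y - (L - \<delta>)) \<le> Y\<^sup>2 - Q"
    by (simp add: algebra_simps)
  moreover have "0 < c"
    using assms(1) by (simp add: c_def)
  ultimately show ?thesis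
    by (simp add: c_def pos_le_divide_eq mult.commute)
qed

section \<open>The linearized augmented Lagrangian and the multiplier update\<close>

definition slpmm_update ::
  "real \<Rightarrow> real^'n \<Rightarrow> real^'m \<Rightarrow> ('m \<Rightarrow> real^'n) \<Rightarrow> real^'n \<Rightarrow> real^'m \<Rightarrow> real^'m" where
  "slpmm_update \<sigma> xk Gk vk y lam = (\<chi> i. pos (lam $ i + \<sigma> * (Gk $ i + inner (vk i) (y - xk))))"

lemma slpmm_L_eq:
  "slpmm_L \<sigma> xk Fk Gk v0k vk y lam
     = Fk + inner v0k (y - xk) + ((norm (slpmm_update \<sigma> xk Gk vk y lam))\<^sup>2 - (norm lam)\<^sup>2) / (2 * \<sigma>)"
  by (simp add: slpmm_L_def slpmm_update_def norm_vec_def L2_set_def sum_nonneg)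

lemma convex_on_slpmm_L:
  fixes xk :: "real^'n"
  assumes "0 \<le> \<sigma>" and "convex S"
  shows "convex_on S (\<lambda>y. slpmm_L \<sigma> xk Fk Gk v0k vk y lam)"
proof -
  have affine: "convex_on S (\<lambda>y. c + inner w (y - xk))" for c and w :: "real^'n"
    using convex_on_compose_affine[OF convex_on_ident[THEN iffD2, OF convex_UNIV] assms(2),
        of "\<lambda>y. c + inner w (y - xk)"]
    by (simp add: algebra_simps inner_diff_right)
  have "convex_on S (\<lambda>y. (pos (lam $ i + \<sigma> * (Gk $ i + inner (vk i) (y - xk))))\<^sup>2)" for i
    by (rule convex_on_compose_affine[OF convex_on_pos_square assms(2)])
       (simp add: algebra_simps inner_diff_right)
  then have "convex_on S (\<lambda>y. 1 / (2 * \<sigma>) *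
      ((\<Sum>i\<in>UNIV. (pos (lam $ i + \<sigma> * (Gk $ i + inner (vk i) (y - xk))))\<^sup>2) - (norm lam)\<^sup>2))"
    using assms by (intro convex_on_cmul convex_on_diff convex_on_sum_fun)
      (auto simp: concave_on_const)
  then show ?thesis
    unfolding slpmm_L_def by (rule convex_on_add[OF affine])
qed

lemma norm_slpmm_update_le:
  assumes "0 \<le> \<sigma>" and "\<And>i. Gk $ i + inner (vk i) (y - xk) \<le> Gy $ i"
  shows "norm (slpmm_update \<sigma> xk Gk vk y lam) \<le> norm (lam + \<sigma> *\<^sub>R Gy)"
  unfolding slpmm_update_def
  by (rule norm_vec_pos_le[where a = "\<chi> i. lam $ i + \<sigma> * (Gk $ i + inner (vk i) (y - xk))", simplified])
     (use assms in \<open>auto intro: mult_left_mono\<close>)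

lemma norm_slpmm_update_square_le:
  fixes xk x1 xh :: "real^'n" and lam Gk Gh :: "real^'m"
  assumes \<sigma>: "0 < \<sigma>" and \<alpha>: "0 \<le> \<alpha>" and C: "convex C" and x1: "x1 \<in> C" and xh: "xh \<in> C"
    and min: "\<And>y. y \<in> C \<Longrightarrow>
        slpmm_L \<sigma> xk Fk Gk v0k vk x1 lam + \<alpha> / 2 * (norm (x1 - xk))\<^sup>2
        \<le> slpmm_L \<sigma> xk Fk Gk v0k vk y lam + \<alpha> / 2 * (norm (y - xk))\<^sup>2"
    and sub: "\<And>i. Gk $ i + inner (vk i) (xh - xk) \<le> Gh $ i"
  shows "(norm (slpmm_update \<sigma> xk Gk vk x1 lam))\<^sup>2
      \<le> (norm (lam + \<sigma> *\<^sub>R Gh))\<^sup>2 + 2 * \<sigma> * inner v0k (xh - x1)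
        + \<alpha> * \<sigma> * ((norm (xh - xk))\<^sup>2 - (norm (xh - x1))\<^sup>2)"
proof -
  let ?U = "\<lambda>y. (norm (slpmm_update \<sigma> xk Gk vk y lam))\<^sup>2 - (norm lam)\<^sup>2"
  have "slpmm_L \<sigma> xk Fk Gk v0k vk x1 lam + \<alpha> / 2 * (norm (x1 - xk))\<^sup>2 + \<alpha> / 2 * (norm (xh - x1))\<^sup>2
      \<le> slpmm_L \<sigma> xk Fk Gk v0k vk xh lam + \<alpha> / 2 * (norm (xh - xk))\<^sup>2"
    using convex_on_slpmm_L[OF less_imp_le[OF \<sigma>] C] x1 xh min by (rule prox_three_point)
  moreover have "0 \<le> \<alpha> / 2 * (norm (x1 - xk))\<^sup>2"
    using \<alpha> by simp
  ultimately have "?U x1 / (2 * \<sigma>) \<le> inner v0k (xh - x1) + ?U xh / (2 * \<sigma>)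
      + \<alpha> / 2 * (norm (xh - xk))\<^sup>2 - \<alpha> / 2 * (norm (xh - x1))\<^sup>2"
    unfolding slpmm_L_eq inner_diff_right by linarith
  then have "?U x1 \<le> (inner v0k (xh - x1) + ?U xh / (2 * \<sigma>)
      + \<alpha> / 2 * (norm (xh - xk))\<^sup>2 - \<alpha> / 2 * (norm (xh - x1))\<^sup>2) * (2 * \<sigma>)"
    using \<sigma> by (simp add: pos_divide_le_eq)
  also have "\<dots> = 2 * \<sigma> * inner v0k (xh - x1) + ?U xh
      + \<alpha> * \<sigma> * ((norm (xh - xk))\<^sup>2 - (norm (xh - x1))\<^sup>2)"
    using \<sigma> by (simp add: field_simps)
  moreover have "?U xh \<le> (norm (lam + \<sigma> *\<^sub>R Gh))\<^sup>2 - (norm lam)\<^sup>2"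
    using norm_slpmm_update_le[OF less_imp_le[OF \<sigma>] sub] by (simp add: power_mono)
  ultimately show ?thesis
    by linarith
qed

section \<open>Filtrations, independence and conditional expectation\<close>

lemma borel_measurable_vec_componentwise:
  fixes f :: "'a \<Rightarrow> real^'n"
  assumes "\<And>i. (\<lambda>\<omega>. f \<omega> $ i) \<in> borel_measurable M"
  shows "f \<in> borel_measurable M"
proof (subst borel_measurable_euclidean_space, intro ballI)
  fix b :: "real^'n" assume "b \<in> Basis"
  then obtain i where "b = axis i 1"
    by (auto simp: Basis_vec_def)
  then show "(\<lambda>\<omega>. f \<omega> \<bullet> b) \<in> borel_measurable M"
    using assms[of i] by (simp add: inner_axis)
qed

lemma sets_gen_filtration:
  "sets (gen_filtration M N xi k) = sigma_sets (space M) (\<Union>i\<in>{..<k}. {xi i -` A \<inter> space M |A. A \<in> sets N})"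
  unfolding gen_filtration_def by (rule sets_measure_of) auto

lemma space_gen_filtration [simp]: "space (gen_filtration M N xi k) = space M"
  unfolding gen_filtration_def by (rule space_measure_of) auto

lemma subalgebra_gen_filtration:
  assumes "\<And>i. xi i \<in> measurable M N"
  shows "subalgebra M (gen_filtration M N xi k)"
  unfolding subalgebra_def sets_gen_filtration
  using assms by (auto intro!: sets.sigma_sets_subset simp: measurable_sets)

lemma subalgebra_gen_filtration_mono:
  "k \<le> j \<Longrightarrow> subalgebra (gen_filtration M N xi j) (gen_filtration M N xi k)"
  unfolding subalgebra_def sets_gen_filtration by (intro conjI sigma_sets_mono' UN_mono) auto

lemma measurable_gen_filtration:
  assumes "xi i \<in> measurable M N" and "i < k"
  shows "xi i \<in> measurable (gen_filtration M N xi k) N"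
proof (rule measurableI)
  show "xi i \<omega> \<in> space N" if "\<omega> \<in> space (gen_filtration M N xi k)" for \<omega>
    using that measurable_space[OF assms(1)] by simp
  show "xi i -` A \<inter> space (gen_filtration M N xi k) \<in> sets (gen_filtration M N xi k)" if "A \<in> sets N" for A
    unfolding sets_gen_filtration using that assms(2) by (intro sigma_sets.Basic) auto
qed

lemma (in prob_space) indep_set_gen_filtration:
  assumes indep: "indep_vars (\<lambda>_. N) xi UNIV"
  shows "indep_set (sets (gen_filtration M N xi j))
    (sigma_sets (space M) {xi j -` A \<inter> space M |A. A \<in> sets N})"
proof -
  define E where "E i = {xi i -` A \<inter> space M |A. A \<in> sets N}" for i
  define I where "I b = (if b then {..<j} else {j})" for b :: bool
  have "indep_sets (\<lambda>b. sigma_sets (space M) (\<Union>i\<in>I b. E i)) UNIV"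
  proof (rule indep_sets_collect_sigma)
    show "indep_sets E (\<Union>b\<in>UNIV. I b)"
      using indep unfolding indep_vars_def2 E_def by (auto intro: indep_sets_mono_index)
    show "Int_stable (E i)" for i
    proof (rule Int_stableI)
      fix a b assume "a \<in> E i" "b \<in> E i"
      then obtain A B where "A \<in> sets N" "B \<in> sets N" "a = xi i -` A \<inter> space M" "b = xi i -` B \<inter> space M"
        by (auto simp: E_def)
      then show "a \<inter> b \<in> E i"
        unfolding E_def by (intro CollectI exI[of _ "A \<inter> B"]) auto
    qed
    show "disjoint_family_on I UNIV"
      unfolding disjoint_family_on_def I_def by auto
  qed
  then show ?thesis
    unfolding indep_set_def
    by (rule indep_sets_mono_sets) (simp split: bool.split add: sets_gen_filtration I_def E_def)
qed

lemma (in prob_space) indep_var_gen_filtration: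
  assumes xi: "\<And>i. xi i \<in> measurable M N" and indep: "indep_vars (\<lambda>_. N) xi UNIV"
    and W: "W \<in> borel_measurable (gen_filtration M N xi j)" and h: "h \<in> borel_measurable N"
  shows "indep_var borel W borel (\<lambda>\<omega>. h (xi j \<omega>))"
proof -
  have "{W -` A \<inter> space M |A. A \<in> sets borel} \<subseteq> sets (gen_filtration M N xi j)"
    using measurable_sets[OF W] by auto
  from sets.sigma_sets_subset[OF this]
  have past: "sigma_sets (space M) {W -` A \<inter> space M |A. A \<in> sets borel} \<subseteq> sets (gen_filtration M N xi j)"
    by simp
  have present: "sigma_sets (space M) {(\<lambda>\<omega>. h (xi j \<omega>)) -` A \<inter> space M |A. A \<in> sets borel}
      \<subseteq> sigma_sets (space M) {xi j -` A \<inter> space M |A. A \<in> sets N}"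
  proof (intro sigma_sets_mono' subsetI)
    fix S assume "S \<in> {(\<lambda>\<omega>. h (xi j \<omega>)) -` A \<inter> space M |A. A \<in> sets borel}"
    then obtain A where "A \<in> sets borel" and "S = (\<lambda>\<omega>. h (xi j \<omega>)) -` A \<inter> space M"
      by auto
    then have "h -` A \<inter> space N \<in> sets N" and "S = xi j -` (h -` A \<inter> space N) \<inter> space M"
      using measurable_sets[OF h] measurable_space[OF xi] by auto
    then show "S \<in> {xi j -` A \<inter> space M |A. A \<in> sets N}"
      by (intro CollectI exI[of _ "h -` A \<inter> space N"] conjI)
  qed
  show ?thesis
    unfolding indep_var_eq indep_set_def
  proof (intro conjI)
    show "random_variable borel W"
      by (rule measurable_from_subalg[OF subalgebra_gen_filtration[OF xi] W])
    show "random_variable borel (\<lambda>\<omega>. h (xi j \<omega>))"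
      by (rule measurable_compose[OF xi h])
    show "indep_sets (case_bool (sigma_sets (space M) {W -` A \<inter> space M |A. A \<in> sets borel})
        (sigma_sets (space M) {(\<lambda>\<omega>. h (xi j \<omega>)) -` A \<inter> space M |A. A \<in> sets borel})) UNIV"
      using indep_set_gen_filtration[OF indep, of j] unfolding indep_set_def
      by (rule indep_sets_mono_sets) (simp split: bool.split add: past present)
  qed
qed

lemma (in sigma_finite_subalgebra) real_cond_exp_le_of_set_integral_le:
  assumes Z: "integrable M Z" and B: "integrable M B" "B \<in> borel_measurable F"
    and le: "\<And>A. A \<in> sets F \<Longrightarrow> (\<integral>x\<in>A. Z x \<partial>M) \<le> (\<integral>x\<in>A. B x \<partial>M)"
  shows "AE x in M. real_cond_exp M F Z x \<le> B x"
proof -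
  let ?MF = "restr_to_subalg M F"
  let ?D = "\<lambda>x. B x - real_cond_exp M F Z x"
  have "integrable M ?D" and "?D \<in> borel_measurable F"
    using Z B by (auto intro!: real_cond_exp_int(1) Bochner_Integration.integrable_diff)
  then have D: "integrable ?MF ?D"
    by (simp add: integrable_in_subalg[OF subalg])
  have "AE x in ?MF. 0 \<le> ?D x"
  proof (rule sigma_finite_measure.density_nonneg[OF sigma_fin_subalg D])
    fix A assume "A \<in> sets ?MF"
    then have [measurable]: "A \<in> sets F"
      using sets_restr_to_subalg[OF subalg] by simp
    then have "A \<in> sets M"
      using subalg by (meson subalgebra_def subsetD)
    have "(\<integral>x\<in>A. ?D x \<partial>?MF) = (\<integral>x\<in>A. ?D x \<partial>M)"
      unfolding set_lebesgue_integral_def using \<open>?D \<in> borel_measurable F\<close>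
      by (simp add: integral_subalgebra2 subalg)
    also have "\<dots> = (\<integral>x\<in>A. B x \<partial>M) - (\<integral>x\<in>A. Z x \<partial>M)"
      using set_integral_diff(2)[of M A B "real_cond_exp M F Z"] real_cond_exp_intA[OF Z \<open>A \<in> sets F\<close>]
        integrable_mult_indicator[OF \<open>A \<in> sets M\<close> B(1)]
        integrable_mult_indicator[OF \<open>A \<in> sets M\<close> real_cond_exp_int(1)[OF Z]]
      by (simp add: set_integrable_def)
    finally show "0 \<le> (\<integral>x\<in>A. ?D x \<partial>?MF)"
      using le[OF \<open>A \<in> sets F\<close>] by simp
  qed
  then show ?thesis
    using AE_restr_to_subalg[OF subalg] by auto
qed

section \<open>Pathwise bounds along the iterates\<close>

locale slpmm = prob_space M for M :: "'w measure" +
  fixes N :: "'b measure" and \<Xi> :: "'b set"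
    and \<xi> :: "'w \<Rightarrow> 'b" and xi :: "nat \<Rightarrow> 'w \<Rightarrow> 'b"
    and C :: "(real^'n) set"
    and F :: "real^'n \<Rightarrow> 'b \<Rightarrow> real"
    and G :: "real^'n \<Rightarrow> 'b \<Rightarrow> real^'m"
    and v0 :: "real^'n \<Rightarrow> 'b \<Rightarrow> real^'n"
    and v :: "'m \<Rightarrow> real^'n \<Rightarrow> 'b \<Rightarrow> real^'n"
    and \<sigma> \<alpha> R \<nu>g \<kappa>f \<kappa>g \<epsilon>0 :: real
    and x0 :: "real^'n" and xhat :: "real^'n"
    and x :: "nat \<Rightarrow> 'w \<Rightarrow> real^'n" and lam :: "nat \<Rightarrow> 'w \<Rightarrow> real^'m"
  assumes \<xi>_meas: "\<xi> \<in> measurable M N"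
    and xi_meas: "\<And>k. xi k \<in> measurable M N"
    and xi_indep: "indep_vars (\<lambda>_. N) xi UNIV"
    and xi_distr: "\<And>k. distr M N (xi k) = distr M N \<xi>"
    and xi_in: "\<And>k \<omega>. \<omega> \<in> space M \<Longrightarrow> xi k \<omega> \<in> \<Xi>"
    and C_convex: "convex C"
    and G_meas: "(\<lambda>(y, z). G y z) \<in> borel_measurable (borel \<Otimes>\<^sub>M N)"
    and v_sub: "\<And>i y z. y \<in> C \<Longrightarrow> z \<in> \<Xi> \<Longrightarrow> v i y z \<in> subdiff_on C (\<lambda>u. G u z $ i) y"
    and v_meas: "\<And>i. (\<lambda>(y, z). v i y z) \<in> borel_measurable (borel \<Otimes>\<^sub>M N)"
    and diam_C: "\<And>y y'. y \<in> C \<Longrightarrow> y' \<in> C \<Longrightarrow> norm (y - y') \<le> R"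
    and G_bound: "\<And>y z. y \<in> C \<Longrightarrow> z \<in> \<Xi> \<Longrightarrow> norm (G y z) \<le> \<nu>g"
    and v0_bound: "\<And>y z. y \<in> C \<Longrightarrow> z \<in> \<Xi> \<Longrightarrow> norm (v0 y z) \<le> \<kappa>f"
    and v_bound: "\<And>i y z. y \<in> C \<Longrightarrow> z \<in> \<Xi> \<Longrightarrow> norm (v i y z) \<le> \<kappa>g"
    and \<epsilon>0_pos: "\<epsilon>0 > 0" and xhat_in: "xhat \<in> C"
    and slater: "\<And>i. expectation (\<lambda>\<omega>. G xhat (\<xi> \<omega>) $ i) \<le> - \<epsilon>0"
    and \<sigma>_pos: "\<sigma> > 0" and \<alpha>_pos: "\<alpha> > 0"
    and x0_in: "x0 \<in> C"
    and x_init: "\<And>\<omega>. \<omega> \<in> space M \<Longrightarrow> x 0 \<omega> = x0"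
    and lam_init: "\<And>\<omega>. \<omega> \<in> space M \<Longrightarrow> lam 0 \<omega> = 0"
    and x_step_in: "\<And>k \<omega>. \<omega> \<in> space M \<Longrightarrow> x (Suc k) \<omega> \<in> C"
    and x_step_min: "\<And>k \<omega> y. \<omega> \<in> space M \<Longrightarrow> y \<in> C \<Longrightarrow>
        slpmm_L \<sigma> (x k \<omega>) (F (x k \<omega>) (xi k \<omega>)) (G (x k \<omega>) (xi k \<omega>))
                (v0 (x k \<omega>) (xi k \<omega>)) (\<lambda>i. v i (x k \<omega>) (xi k \<omega>)) (x (Suc k) \<omega>) (lam k \<omega>)
          + \<alpha> / 2 * (norm (x (Suc k) \<omega> - x k \<omega>))\<^sup>2
        \<le> slpmm_L \<sigma> (x k \<omega>) (F (x k \<omega>) (xi k \<omega>)) (G (x k \<omega>) (xi k \<omega>))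
                (v0 (x k \<omega>) (xi k \<omega>)) (\<lambda>i. v i (x k \<omega>) (xi k \<omega>)) y (lam k \<omega>)
          + \<alpha> / 2 * (norm (y - x k \<omega>))\<^sup>2"
    and lam_step: "\<And>k \<omega>. \<omega> \<in> space M \<Longrightarrow>
        lam (Suc k) \<omega> = slpmm_update \<sigma> (x k \<omega>) (G (x k \<omega>) (xi k \<omega>))
                            (\<lambda>i. v i (x k \<omega>) (xi k \<omega>)) (x (Suc k) \<omega>) (lam k \<omega>)"
    and x_adapted: "\<And>k. x k \<in> borel_measurable (gen_filtration M N xi k)"
begin

definition \<beta>0 :: real where "\<beta>0 = \<nu>g + sqrt (real CARD('m)) * \<kappa>g * R"

lemma x_in: "\<omega> \<in> space M \<Longrightarrow> x k \<omega> \<in> C"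
  by (cases k) (auto simp: x_init x0_in x_step_in)

lemma constants_nonneg: "0 \<le> R" "0 \<le> \<nu>g" "0 \<le> \<kappa>f" "0 \<le> \<kappa>g"
proof -
  obtain \<omega> where \<omega>: "\<omega> \<in> space M"
    using not_empty by blast
  show "0 \<le> R"
    using diam_C[OF x0_in x0_in] by simp
  show "0 \<le> \<nu>g" "0 \<le> \<kappa>f" "0 \<le> \<kappa>g"
    using G_bound[OF x0_in xi_in[OF \<omega>]] v0_bound[OF x0_in xi_in[OF \<omega>]]
      v_bound[OF x0_in xi_in[OF \<omega>], of undefined 0] norm_ge_zero order_trans by blast+
qed

lemma \<beta>0_nonneg: "0 \<le> \<beta>0"
  unfolding \<beta>0_def using constants_nonneg by simp

lemma lam_nonneg: "\<omega> \<in> space M \<Longrightarrow> 0 \<le> lam k \<omega> $ i"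
  by (cases k) (auto simp: lam_init lam_step slpmm_update_def pos_nonneg)

lemma norm_lam_Suc_diff_le:
  assumes \<omega>: "\<omega> \<in> space M"
  shows "norm (lam (Suc k) \<omega> - lam k \<omega>) \<le> \<sigma> * \<beta>0"
proof -
  define g where "g = G (x k \<omega>) (xi k \<omega>)"
  define w :: "real^'m" where "w = (\<chi> i. inner (v i (x k \<omega>) (xi k \<omega>)) (x (Suc k) \<omega> - x k \<omega>))"
  have "\<bar>w $ i\<bar> \<le> \<kappa>g * R" for i
  proof -
    have "\<bar>w $ i\<bar> \<le> norm (v i (x k \<omega>) (xi k \<omega>)) * norm (x (Suc k) \<omega> - x k \<omega>)"
      unfolding w_def by (simp add: Cauchy_Schwarz_ineq2)
    also have "\<dots> \<le> \<kappa>g * R"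
      using \<omega> constants_nonneg by (intro mult_mono v_bound diam_C x_in xi_in) auto
    finally show ?thesis .
  qed
  then have "norm w \<le> sqrt (real CARD('m)) * \<kappa>g * R"
    using norm_le_sqrt_card_mult[of w] by (simp add: mult.assoc)
  moreover have "norm g \<le> \<nu>g"
    unfolding g_def using \<omega> by (intro G_bound x_in xi_in)
  ultimately have "norm (g + w) \<le> \<beta>0"
    using norm_triangle_ineq[of g w] unfolding \<beta>0_def by linarith
  have "lam (Suc k) \<omega> = (\<chi> i. pos (lam k \<omega> $ i + (\<sigma> *\<^sub>R (g + w)) $ i))"
    using \<omega> by (simp add: lam_step slpmm_update_def g_def w_def algebra_simps)
  then have "norm (lam (Suc k) \<omega> - lam k \<omega>) \<le> norm (\<sigma> *\<^sub>R (g + w))"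
    using norm_vec_pos_add_diff_le[OF lam_nonneg[OF \<omega>], of k "\<sigma> *\<^sub>R (g + w)"] by (simp only:)
  also have "\<dots> \<le> \<sigma> * \<beta>0"
    using \<open>norm (g + w) \<le> \<beta>0\<close> \<sigma>_pos by (simp add: mult_left_mono)
  finally show ?thesis .
qed

lemma abs_norm_lam_Suc_diff_le: "\<omega> \<in> space M \<Longrightarrow> \<bar>norm (lam (Suc k) \<omega>) - norm (lam k \<omega>)\<bar> \<le> \<sigma> * \<beta>0"
  using norm_lam_Suc_diff_le norm_triangle_ineq3 order_trans by blast

lemma norm_lam_add_bounds:
  assumes "\<omega> \<in> space M"
  shows "norm (lam k \<omega>) - real j * (\<sigma> * \<beta>0) \<le> norm (lam (k + j) \<omega>)"
    and "norm (lam (k + j) \<omega>) \<le> norm (lam k \<omega>) + real j * (\<sigma> * \<beta>0)"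
proof (induction j)
  case (Suc j)
  have "\<bar>norm (lam (Suc (k + j)) \<omega>) - norm (lam (k + j) \<omega>)\<bar> \<le> \<sigma> * \<beta>0"
    by (rule abs_norm_lam_Suc_diff_le[OF assms])
  with Suc show "norm (lam k \<omega>) - real (Suc j) * (\<sigma> * \<beta>0) \<le> norm (lam (k + Suc j) \<omega>)"
    and "norm (lam (k + Suc j) \<omega>) \<le> norm (lam k \<omega>) + real (Suc j) * (\<sigma> * \<beta>0)"
    by (simp_all add: algebra_simps abs_le_iff)
qed simp_all

lemma norm_lam_le: "\<omega> \<in> space M \<Longrightarrow> norm (lam k \<omega>) \<le> real k * (\<sigma> * \<beta>0)"
  using norm_lam_add_bounds(2)[of \<omega> 0 k] by (simp add: lam_init)

lemma norm_lam_Suc_square_le: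
  assumes \<omega>: "\<omega> \<in> space M"
  shows "(norm (lam (Suc k) \<omega>))\<^sup>2 \<le> (norm (lam k \<omega>))\<^sup>2 + 2 * \<sigma> * inner (lam k \<omega>) (G xhat (xi k \<omega>))
     + \<sigma>\<^sup>2 * \<nu>g\<^sup>2 + 2 * \<sigma> * \<kappa>f * R
     + \<alpha> * \<sigma> * ((norm (xhat - x k \<omega>))\<^sup>2 - (norm (xhat - x (Suc k) \<omega>))\<^sup>2)"
proof -
  define l where "l = lam k \<omega>"
  define Gh where "Gh = G xhat (xi k \<omega>)"
  have xk: "x k \<omega> \<in> C" and z: "xi k \<omega> \<in> \<Xi>"
    using \<omega> by (auto intro: x_in xi_in)
  have sub: "G (x k \<omega>) (xi k \<omega>) $ i + inner (v i (x k \<omega>) (xi k \<omega>)) (xhat - x k \<omega>) \<le> Gh $ i" for i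
    using v_sub[OF xk z, of i] xhat_in by (auto simp: subdiff_on_def Gh_def)
  have "(norm (lam (Suc k) \<omega>))\<^sup>2 \<le> (norm (l + \<sigma> *\<^sub>R Gh))\<^sup>2
      + 2 * \<sigma> * inner (v0 (x k \<omega>) (xi k \<omega>)) (xhat - x (Suc k) \<omega>)
      + \<alpha> * \<sigma> * ((norm (xhat - x k \<omega>))\<^sup>2 - (norm (xhat - x (Suc k) \<omega>))\<^sup>2)"
    unfolding lam_step[OF \<omega>] l_def
    using \<sigma>_pos \<alpha>_pos C_convex x_step_in[OF \<omega>] xhat_in x_step_min[OF \<omega>] sub
    by (intro norm_slpmm_update_square_le) auto
  moreover have "(norm (l + \<sigma> *\<^sub>R Gh))\<^sup>2 = (norm l)\<^sup>2 + 2 * \<sigma> * inner l Gh + \<sigma>\<^sup>2 * (norm Gh)\<^sup>2"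
    unfolding power2_norm_eq_inner by (simp add: inner_add_left inner_add_right inner_commute power2_eq_square)
  moreover have "\<sigma>\<^sup>2 * (norm Gh)\<^sup>2 \<le> \<sigma>\<^sup>2 * \<nu>g\<^sup>2"
    unfolding Gh_def using G_bound[OF xhat_in z] by (intro mult_left_mono power_mono) auto
  moreover have "inner (v0 (x k \<omega>) (xi k \<omega>)) (xhat - x (Suc k) \<omega>) \<le> \<kappa>f * R"
    using \<omega> constants_nonneg
    by (intro order_trans[OF norm_cauchy_schwarz] mult_mono v0_bound diam_C xk z xhat_in x_step_in) auto
  then have "2 * \<sigma> * inner (v0 (x k \<omega>) (xi k \<omega>)) (xhat - x (Suc k) \<omega>) \<le> 2 * \<sigma> * \<kappa>f * R"
    using \<sigma>_pos by (simp add: mult.assoc)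
  ultimately show ?thesis
    unfolding l_def Gh_def by linarith
qed

lemma norm_lam_add_square_le:
  assumes \<omega>: "\<omega> \<in> space M"
  shows "(norm (lam (k + j) \<omega>))\<^sup>2 \<le> (norm (lam k \<omega>))\<^sup>2
     + 2 * \<sigma> * (\<Sum>t<j. inner (lam (k + t) \<omega>) (G xhat (xi (k + t) \<omega>)))
     + real j * (\<sigma>\<^sup>2 * \<nu>g\<^sup>2 + 2 * \<sigma> * \<kappa>f * R) + \<alpha> * \<sigma> * R\<^sup>2"
proof -
  let ?D = "\<lambda>t. (norm (xhat - x t \<omega>))\<^sup>2"
  have telescope: "(norm (lam (k + j) \<omega>))\<^sup>2 \<le> (norm (lam k \<omega>))\<^sup>2
     + 2 * \<sigma> * (\<Sum>t<j. inner (lam (k + t) \<omega>) (G xhat (xi (k + t) \<omega>)))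
     + real j * (\<sigma>\<^sup>2 * \<nu>g\<^sup>2 + 2 * \<sigma> * \<kappa>f * R) + \<alpha> * \<sigma> * (?D k - ?D (k + j))"
  proof (induction j)
    case (Suc j)
    then show ?case
      using norm_lam_Suc_square_le[OF \<omega>, of "k + j"] by (simp add: algebra_simps)
  qed simp
  have "?D k \<le> R\<^sup>2"
    using diam_C[OF xhat_in x_in[OF \<omega>]] by (intro power_mono) auto
  then have "?D k - ?D (k + j) \<le> R\<^sup>2"
    using zero_le_power2[of "norm (xhat - x (k + j) \<omega>)"] by linarith
  then have "\<alpha> * \<sigma> * (?D k - ?D (k + j)) \<le> \<alpha> * \<sigma> * R\<^sup>2"
    using \<alpha>_pos \<sigma>_pos by (intro mult_left_mono) auto
  with telescope show ?thesis
    by linarith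
qed

section \<open>Conditional drift of the multiplier norm\<close>

abbreviation Fk :: "nat \<Rightarrow> 'w measure" where
  "Fk k \<equiv> gen_filtration M N xi k"

lemma measurable_Fk_mono: "f \<in> measurable (Fk k) P \<Longrightarrow> k \<le> j \<Longrightarrow> f \<in> measurable (Fk j) P"
  by (rule measurable_from_subalg[OF subalgebra_gen_filtration_mono])

lemma measurable_Fk_M: "f \<in> measurable (Fk k) P \<Longrightarrow> f \<in> measurable M P"
  by (rule measurable_from_subalg[OF subalgebra_gen_filtration[OF xi_meas]])

lemma borel_measurable_G_comp:
  "f \<in> borel_measurable P \<Longrightarrow> g \<in> measurable P N \<Longrightarrow> (\<lambda>\<omega>. G (f \<omega>) (g \<omega>)) \<in> borel_measurable P"
  using measurable_compose[OF measurable_Pair G_meas] by simp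

lemma borel_measurable_v_comp:
  "f \<in> borel_measurable P \<Longrightarrow> g \<in> measurable P N \<Longrightarrow> (\<lambda>\<omega>. v i (f \<omega>) (g \<omega>)) \<in> borel_measurable P"
  using measurable_compose[OF measurable_Pair v_meas] by simp

lemma lam_measurable: "lam k \<in> borel_measurable (Fk k)"
proof (induction k)
  case 0
  show ?case
    by (subst measurable_cong[where g = "\<lambda>_. 0"]) (auto simp: lam_init)
next
  case (Suc k)
  have [measurable]: "x k \<in> borel_measurable (Fk (Suc k))" "x (Suc k) \<in> borel_measurable (Fk (Suc k))"
      "xi k \<in> measurable (Fk (Suc k)) N" "lam k \<in> borel_measurable (Fk (Suc k))"
    using measurable_Fk_mono[OF x_adapted] measurable_Fk_mono[OF Suc.IH] x_adapted
      measurable_gen_filtration[OF xi_meas] by auto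
  then have [measurable]: "(\<lambda>\<omega>. G (x k \<omega>) (xi k \<omega>)) \<in> borel_measurable (Fk (Suc k))"
      "(\<lambda>\<omega>. v i (x k \<omega>) (xi k \<omega>)) \<in> borel_measurable (Fk (Suc k))" for i
    by (simp_all add: borel_measurable_G_comp borel_measurable_v_comp)
  have "(\<lambda>\<omega>. slpmm_update \<sigma> (x k \<omega>) (G (x k \<omega>) (xi k \<omega>)) (\<lambda>i. v i (x k \<omega>) (xi k \<omega>))
      (x (Suc k) \<omega>) (lam k \<omega>) $ i) \<in> borel_measurable (Fk (Suc k))" for i
    using borel_measurable_nth[measurable] by (simp add: slpmm_update_def pos_def) measurable
  then have "(\<lambda>\<omega>. slpmm_update \<sigma> (x k \<omega>) (G (x k \<omega>) (xi k \<omega>)) (\<lambda>i. v i (x k \<omega>) (xi k \<omega>))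
      (x (Suc k) \<omega>) (lam k \<omega>)) \<in> borel_measurable (Fk (Suc k))"
    by (rule borel_measurable_vec_componentwise)
  then show ?case
    by (subst measurable_cong[OF lam_step]) simp_all
qed

lemma borel_measurable_G_xhat: "(\<lambda>z. G xhat z $ i) \<in> borel_measurable N"
proof -
  have [measurable]: "(\<lambda>z. G xhat z) \<in> borel_measurable N"
    using borel_measurable_G_comp[of "\<lambda>_. xhat" N "\<lambda>z. z"] by simp
  show ?thesis
    using borel_measurable_nth[measurable] by measurable
qed

lemma abs_G_xhat_le: "\<omega> \<in> space M \<Longrightarrow> \<bar>G xhat (xi j \<omega>) $ i\<bar> \<le> \<nu>g"
  using G_bound[OF xhat_in xi_in] component_le_norm_cart order_trans by blast

lemma integral_weighted_slater_le:
  assumes W: "W \<in> borel_measurable (Fk j)" and W_bound: "\<And>\<omega>. \<omega> \<in> space M \<Longrightarrow> 0 \<le> W \<omega> \<and> W \<omega> \<le> c"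
  shows "integrable M (\<lambda>\<omega>. W \<omega> * (G xhat (xi j \<omega>) $ i + \<epsilon>0))"
    and "(\<integral>\<omega>. W \<omega> * (G xhat (xi j \<omega>) $ i + \<epsilon>0) \<partial>M) \<le> 0"
proof -
  note borel_measurable_G_xhat[measurable]
  have [measurable]: "W \<in> borel_measurable M"
    by (rule measurable_Fk_M[OF W])
  have "integrable M W"
    using W_bound by (intro integrable_const_bound[where B = c]) auto
  moreover have "integrable M (\<lambda>\<omega>. G xhat (xi j \<omega>) $ i)"
    using abs_G_xhat_le xi_meas by (intro integrable_const_bound[where B = \<nu>g]) auto
  moreover note indep = indep_var_gen_filtration[OF xi_meas xi_indep W borel_measurable_G_xhat]
  ultimately have product: "(\<integral>\<omega>. W \<omega> * G xhat (xi j \<omega>) $ i \<partial>M)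
      = (\<integral>\<omega>. W \<omega> \<partial>M) * (\<integral>\<omega>. G xhat (xi j \<omega>) $ i \<partial>M)"
    and "integrable M (\<lambda>\<omega>. W \<omega> * G xhat (xi j \<omega>) $ i)"
    by (auto intro: indep_var_lebesgue_integral indep_var_integrable)
  with \<open>integrable M W\<close> show "integrable M (\<lambda>\<omega>. W \<omega> * (G xhat (xi j \<omega>) $ i + \<epsilon>0))"
    by (simp add: distrib_left)
  have "(\<integral>\<omega>. G xhat (xi j \<omega>) $ i \<partial>M) = expectation (\<lambda>\<omega>. G xhat (\<xi> \<omega>) $ i)"
    using integral_distr[OF xi_meas borel_measurable_G_xhat] integral_distr[OF \<xi>_meas borel_measurable_G_xhat]
    by (simp add: xi_distr)
  then have "(\<integral>\<omega>. W \<omega> * (G xhat (xi j \<omega>) $ i + \<epsilon>0) \<partial>M)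
      = (\<integral>\<omega>. W \<omega> \<partial>M) * (expectation (\<lambda>\<omega>. G xhat (\<xi> \<omega>) $ i) + \<epsilon>0)"
    using product \<open>integrable M W\<close> \<open>integrable M (\<lambda>\<omega>. W \<omega> * G xhat (xi j \<omega>) $ i)\<close>
    by (simp add: distrib_left algebra_simps)
  also have "\<dots> \<le> 0"
    using W_bound slater[of i] by (intro mult_nonneg_nonpos integral_nonneg_AE) auto
  finally show "(\<integral>\<omega>. W \<omega> * (G xhat (xi j \<omega>) $ i + \<epsilon>0) \<partial>M) \<le> 0" .
qed

text \<open>The threshold \<open>\<vartheta>(\<sigma>, \<alpha>, s)\<close> of the statement, and the \<open>F\<^sub>k\<close>-measurable bound on the
  conditional mean of \<open>\<parallel>\<lambda>(k+s)\<parallel>\<^sup>2\<close> that the Slater argument provides.\<close>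

definition threshold :: "nat \<Rightarrow> real" where
  "threshold s = \<epsilon>0 * \<sigma> * real s / 2 + \<sigma> * \<beta>0 * (real s - 1) + \<alpha> * R\<^sup>2 / (\<epsilon>0 * real s)
     + 2 * \<kappa>f * R / \<epsilon>0 + \<sigma> * \<nu>g\<^sup>2 / \<epsilon>0"

definition square_norm_bound :: "nat \<Rightarrow> nat \<Rightarrow> 'w \<Rightarrow> real" where
  "square_norm_bound k s \<omega> = (norm (lam k \<omega>))\<^sup>2 - 2 * \<sigma> * \<epsilon>0 * (\<Sum>t<s. norm (lam k \<omega>) - real t * (\<sigma> * \<beta>0))
     + real s * (\<sigma>\<^sup>2 * \<nu>g\<^sup>2 + 2 * \<sigma> * \<kappa>f * R) + \<alpha> * \<sigma> * R\<^sup>2"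

lemma square_norm_drift_le:
  assumes \<omega>: "\<omega> \<in> space M"
  shows "(norm (lam (k + s) \<omega>))\<^sup>2 - square_norm_bound k s \<omega>
     \<le> 2 * \<sigma> * (\<Sum>t<s. \<Sum>i\<in>UNIV. lam (k + t) \<omega> $ i * (G xhat (xi (k + t) \<omega>) $ i + \<epsilon>0))"
proof -
  have "norm (lam k \<omega>) - real t * (\<sigma> * \<beta>0) \<le> (\<Sum>i\<in>UNIV. lam (k + t) \<omega> $ i)" for t
  proof -
    have "norm (lam k \<omega>) - real t * (\<sigma> * \<beta>0) \<le> norm (lam (k + t) \<omega>)"
      by (rule norm_lam_add_bounds(1)[OF \<omega>])
    also have "\<dots> \<le> (\<Sum>i\<in>UNIV. \<bar>lam (k + t) \<omega> $ i\<bar>)"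
      by (rule norm_le_l1_cart)
    finally show ?thesis
      using lam_nonneg[OF \<omega>] by simp
  qed
  then have "2 * \<sigma> * \<epsilon>0 * (\<Sum>t<s. norm (lam k \<omega>) - real t * (\<sigma> * \<beta>0))
      \<le> 2 * \<sigma> * \<epsilon>0 * (\<Sum>t<s. \<Sum>i\<in>UNIV. lam (k + t) \<omega> $ i)"
    using \<sigma>_pos \<epsilon>0_pos by (intro mult_left_mono sum_mono) auto
  moreover have "2 * \<sigma> * (\<Sum>t<s. \<Sum>i\<in>UNIV. lam (k + t) \<omega> $ i * (G xhat (xi (k + t) \<omega>) $ i + \<epsilon>0))
      = 2 * \<sigma> * (\<Sum>t<s. inner (lam (k + t) \<omega>) (G xhat (xi (k + t) \<omega>)))
        + 2 * \<sigma> * \<epsilon>0 * (\<Sum>t<s. \<Sum>i\<in>UNIV. lam (k + t) \<omega> $ i)"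
    by (simp add: inner_vec_def distrib_left sum.distrib sum_distrib_left algebra_simps)
  ultimately show ?thesis
    using norm_lam_add_square_le[OF \<omega>, of k s] unfolding square_norm_bound_def by linarith
qed

lemma threshold_ge:
  assumes "0 < s"
  shows "real s * (\<sigma> * \<epsilon>0 / 2) \<le> threshold s"
proof -
  have "0 \<le> \<sigma> * \<beta>0 * (real s - 1)" "0 \<le> \<alpha> * R\<^sup>2 / (\<epsilon>0 * real s)"
    "0 \<le> 2 * \<kappa>f * R / \<epsilon>0" "0 \<le> \<sigma> * \<nu>g\<^sup>2 / \<epsilon>0"
    using assms \<sigma>_pos \<epsilon>0_pos \<alpha>_pos \<beta>0_nonneg constants_nonneg by simp_all
  then show ?thesis
    unfolding threshold_def by (simp add: algebra_simps)
qed

lemma square_norm_bound_le: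
  assumes s: "0 < s" and L: "threshold s \<le> norm (lam k \<omega>)"
  shows "square_norm_bound k s \<omega> \<le> (norm (lam k \<omega>) - real s * (\<sigma> * \<epsilon>0 / 2))\<^sup>2 - 3 * (real s * (\<sigma> * \<epsilon>0 / 2))\<^sup>2"
proof -
  define L where "L = norm (lam k \<omega>)"
  define d where "d = real s * (\<sigma> * \<epsilon>0 / 2)"
  define D where "D = \<sigma>\<^sup>2 * \<epsilon>0 * \<beta>0 * real s * (real s - 1) + real s * (\<sigma>\<^sup>2 * \<nu>g\<^sup>2 + 2 * \<sigma> * \<kappa>f * R) + \<alpha> * \<sigma> * R\<^sup>2"
  have "(\<Sum>t<s. real t) = real s * (real s - 1) / 2"
    by (induction s) (auto simp: field_simps)
  then have sum_eq: "(\<Sum>t<s. L - real t * (\<sigma> * \<beta>0)) = real s * L - \<sigma> * \<beta>0 * (real s * (real s - 1) / 2)"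
    by (simp add: sum_subtractf flip: sum_distrib_right)
  have "square_norm_bound k s \<omega> = L\<^sup>2 - 4 * d * L + D"
    unfolding square_norm_bound_def L_def[symmetric] sum_eq d_def D_def by (simp add: field_simps power2_eq_square)
  moreover have "2 * d * threshold s = 2 * d\<^sup>2 + D"
    unfolding threshold_def d_def D_def using s \<epsilon>0_pos by (simp add: field_simps power2_eq_square)
  moreover have "2 * d * threshold s \<le> 2 * d * L"
    using L s \<sigma>_pos \<epsilon>0_pos by (simp add: L_def d_def)
  ultimately have "square_norm_bound k s \<omega> \<le> L\<^sup>2 - 2 * d * L - 2 * d\<^sup>2"
    by linarith
  also have "\<dots> = (L - d)\<^sup>2 - 3 * d\<^sup>2"
    by (simp add: power2_eq_square algebra_simps)
  finally show ?thesis
    by (simp add: L_def d_def)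
qed

lemma norm_lam_drift_le_slater_sum:
  assumes s: "0 < s" and \<omega>: "\<omega> \<in> space M" and L: "threshold s \<le> norm (lam k \<omega>)"
  defines "d \<equiv> real s * (\<sigma> * \<epsilon>0 / 2)"
  shows "norm (lam (k + s) \<omega>) - (norm (lam k \<omega>) - d)
    \<le> (2 * \<sigma> * (\<Sum>t<s. \<Sum>i\<in>UNIV. lam (k + t) \<omega> $ i * (G xhat (xi (k + t) \<omega>) $ i + \<epsilon>0)))
        / (2 * max (norm (lam k \<omega>) - d) d)"
proof -
  have "0 < d"
    unfolding d_def using s \<sigma>_pos \<epsilon>0_pos by simp
  moreover have "d \<le> norm (lam k \<omega>)"
    using threshold_ge[OF s] L unfolding d_def by linarith
  ultimately have "norm (lam (k + s) \<omega>) - (norm (lam k \<omega>) - d)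
      \<le> ((norm (lam (k + s) \<omega>))\<^sup>2 - square_norm_bound k s \<omega>) / (2 * max (norm (lam k \<omega>) - d) d)"
    using square_norm_bound_le[OF s L] unfolding d_def by (intro sub_le_square_gap_div) auto
  also have "\<dots> \<le> (2 * \<sigma> * (\<Sum>t<s. \<Sum>i\<in>UNIV. lam (k + t) \<omega> $ i * (G xhat (xi (k + t) \<omega>) $ i + \<epsilon>0)))
        / (2 * max (norm (lam k \<omega>) - d) d)"
    using square_norm_drift_le[OF \<omega>] \<open>0 < d\<close> by (intro divide_right_mono) auto
  finally show ?thesis .
qed

lemma integral_weighted_slater_sum_le:
  fixes s :: nat
  assumes u: "u \<in> borel_measurable (Fk k)" and u_bound: "\<And>\<omega>. \<omega> \<in> space M \<Longrightarrow> 0 \<le> u \<omega> \<and> u \<omega> \<le> c"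
  defines "f \<equiv> \<lambda>\<omega>. u \<omega> * (\<Sum>t<s. \<Sum>i\<in>UNIV. lam (k + t) \<omega> $ i * (G xhat (xi (k + t) \<omega>) $ i + \<epsilon>0))"
  shows "integrable M f" and "integral\<^sup>L M f \<le> 0"
proof -
  let ?T = "\<lambda>t i \<omega>. u \<omega> * lam (k + t) \<omega> $ i * (G xhat (xi (k + t) \<omega>) $ i + \<epsilon>0)"
  have f_eq: "f = (\<lambda>\<omega>. \<Sum>t<s. \<Sum>i\<in>UNIV. ?T t i \<omega>)"
    unfolding f_def by (simp add: sum_distrib_left mult.assoc)
  have "integrable M (?T t i) \<and> integral\<^sup>L M (?T t i) \<le> 0" for t i
  proof -
    have [measurable]: "u \<in> borel_measurable (Fk (k + t))" "lam (k + t) \<in> borel_measurable (Fk (k + t))"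
      by (auto intro: measurable_Fk_mono[OF u] lam_measurable)
    have "(\<lambda>\<omega>. u \<omega> * lam (k + t) \<omega> $ i) \<in> borel_measurable (Fk (k + t))"
      using borel_measurable_nth[measurable] by measurable
    moreover have "0 \<le> u \<omega> * lam (k + t) \<omega> $ i \<and> u \<omega> * lam (k + t) \<omega> $ i \<le> c * (real (k + t) * (\<sigma> * \<beta>0))"
      if "\<omega> \<in> space M" for \<omega>
      using u_bound[OF that] lam_nonneg[OF that] component_le_norm_cart[of "lam (k + t) \<omega>" i]
        norm_lam_le[OF that, of "k + t"]
      by (auto intro!: mult_mono)
    ultimately have "integrable M (\<lambda>\<omega>. u \<omega> * lam (k + t) \<omega> $ i * (G xhat (xi (k + t) \<omega>) $ i + \<epsilon>0))"
        "(\<integral>\<omega>. u \<omega> * lam (k + t) \<omega> $ i * (G xhat (xi (k + t) \<omega>) $ i + \<epsilon>0) \<partial>M) \<le> 0"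
      by (rule integral_weighted_slater_le, blast)+
    then show ?thesis
      by simp
  qed
  then show "integrable M f" and "integral\<^sup>L M f \<le> 0"
    unfolding f_eq by (auto intro!: sum_nonpos simp: integral_sum)
qed

lemma sigma_finite_subalgebra_Fk: "sigma_finite_subalgebra M (Fk k)"
  using subalgebra_gen_filtration[OF xi_meas] finite_measure_axioms
  by (intro finite_measure_subalgebra_is_sigma_finite)
     (simp add: finite_measure_subalgebra_def finite_measure_subalgebra_axioms_def)

definition drift_bound :: "nat \<Rightarrow> nat \<Rightarrow> 'w \<Rightarrow> real" where
  "drift_bound k s \<omega> = (if norm (lam k \<omega>) < threshold s then real s * \<sigma> * \<beta>0 else - real s * (\<sigma> * \<epsilon>0 / 2))"

lemma norm_lam_measurable [measurable]: "(\<lambda>\<omega>. norm (lam k \<omega>)) \<in> borel_measurable (Fk k)"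
  using lam_measurable[of k] by measurable

lemma integrable_norm_lam_diff: "integrable M (\<lambda>\<omega>. norm (lam (k + s) \<omega>) - norm (lam k \<omega>))"
proof (rule integrable_const_bound[where B = "real s * (\<sigma> * \<beta>0)"])
  show "AE \<omega> in M. norm (norm (lam (k + s) \<omega>) - norm (lam k \<omega>)) \<le> real s * (\<sigma> * \<beta>0)"
  proof (rule AE_I2)
    fix \<omega> assume "\<omega> \<in> space M"
    then show "norm (norm (lam (k + s) \<omega>) - norm (lam k \<omega>)) \<le> real s * (\<sigma> * \<beta>0)"
      using norm_lam_add_bounds[of \<omega> k s] by (simp add: abs_le_iff)
  qed
  show "(\<lambda>\<omega>. norm (lam (k + s) \<omega>) - norm (lam k \<omega>)) \<in> borel_measurable M"
    using measurable_Fk_M[OF norm_lam_measurable] by measurable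
qed

lemma drift_bound_measurable: "drift_bound k s \<in> borel_measurable (Fk k)"
  unfolding drift_bound_def[abs_def] by measurable

lemma integrable_drift_bound: "integrable M (drift_bound k s)"
  using measurable_Fk_M[OF drift_bound_measurable]
  by (intro integrable_const_bound[where B = "\<bar>real s * \<sigma> * \<beta>0\<bar> + \<bar>real s * (\<sigma> * \<epsilon>0 / 2)\<bar>"])
     (auto simp: drift_bound_def)

lemma set_integral_norm_lam_drift_le:
  assumes s: "0 < s" and A: "A \<in> sets (Fk k)"
  shows "(\<integral>\<omega>\<in>A. norm (lam (k + s) \<omega>) - norm (lam k \<omega>) \<partial>M) \<le> (\<integral>\<omega>\<in>A. drift_bound k s \<omega> \<partial>M)"
proof -
  define Z where "Z \<omega> = norm (lam (k + s) \<omega>) - norm (lam k \<omega>)" for \<omega>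
  define d where "d = real s * (\<sigma> * \<epsilon>0 / 2)"
  let ?S = "\<lambda>\<omega>. \<Sum>t<s. \<Sum>i\<in>UNIV. lam (k + t) \<omega> $ i * (G xhat (xi (k + t) \<omega>) $ i + \<epsilon>0)"
  have [measurable]: "A \<in> sets (Fk k)" "A \<in> sets M"
    using A subalgebra_gen_filtration[where xi = xi and k = k, OF xi_meas] by (auto simp: subalgebra_def)
  \<comment> \<open>AM-GM weight: turns the square drift into a bound on the norm drift\<close>
  define u where "u \<omega> = indicator {\<omega>\<in>A. threshold s \<le> norm (lam k \<omega>)} \<omega> / (2 * max (norm (lam k \<omega>) - d) d)" for \<omega>
  have "0 < d"
    unfolding d_def using s \<sigma>_pos \<epsilon>0_pos by simp
  then have u_bound: "0 \<le> u \<omega> \<and> u \<omega> \<le> 1 / (2 * d)" for \<omega>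
    unfolding u_def by (auto simp: indicator_def frac_le)
  have u: "u \<in> borel_measurable (Fk k)"
    unfolding u_def by measurable
  have "indicator A \<omega> * (Z \<omega> - drift_bound k s \<omega>) \<le> 2 * \<sigma> * (u \<omega> * ?S \<omega>)" if \<omega>: "\<omega> \<in> space M" for \<omega>
  proof (cases "\<omega> \<in> A \<and> threshold s \<le> norm (lam k \<omega>)")
    case True
    then show ?thesis
      using norm_lam_drift_le_slater_sum[OF s \<omega>, of k] by (simp add: u_def Z_def drift_bound_def d_def)
  next
    case False
    then show ?thesis
      using norm_lam_add_bounds(2)[OF \<omega>, of k s] by (auto simp: u_def Z_def drift_bound_def indicator_def)
  qed
  moreover have "integrable M (\<lambda>\<omega>. indicator A \<omega> * (Z \<omega> - drift_bound k s \<omega>))"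
    using integrable_mult_indicator[OF \<open>A \<in> sets M\<close>
        Bochner_Integration.integrable_diff[OF integrable_norm_lam_diff integrable_drift_bound]]
    by (simp add: Z_def)
  ultimately have "(\<integral>\<omega>. indicator A \<omega> * (Z \<omega> - drift_bound k s \<omega>) \<partial>M) \<le> (\<integral>\<omega>. 2 * \<sigma> * (u \<omega> * ?S \<omega>) \<partial>M)"
    using integral_weighted_slater_sum_le(1)[OF u u_bound, of s] by (intro integral_mono) auto
  also have "\<dots> \<le> 0"
    using integral_weighted_slater_sum_le(2)[OF u u_bound, of s] \<sigma>_pos by (simp add: mult_nonneg_nonpos)
  finally show ?thesis
    using integrable_real_mult_indicator[OF \<open>A \<in> sets M\<close> integrable_norm_lam_diff[of k s]]
      integrable_real_mult_indicator[OF \<open>A \<in> sets M\<close> integrable_drift_bound[of k s]]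
    by (simp add: set_lebesgue_integral_def right_diff_distrib mult.commute Z_def)
qed

lemma cond_exp_norm_lam_drift_le:
  assumes "0 < s"
  shows "AE \<omega> in M. real_cond_exp M (Fk k) (\<lambda>\<omega>'. norm (lam (k + s) \<omega>') - norm (lam k \<omega>')) \<omega>
      \<le> drift_bound k s \<omega>"
proof (rule sigma_finite_subalgebra.real_cond_exp_le_of_set_integral_le[OF sigma_finite_subalgebra_Fk
      integrable_norm_lam_diff integrable_drift_bound drift_bound_measurable])
  show "(\<integral>\<omega>\<in>A. norm (lam (k + s) \<omega>) - norm (lam k \<omega>) \<partial>M) \<le> (\<integral>\<omega>\<in>A. drift_bound k s \<omega> \<partial>M)"
    if "A \<in> sets (Fk k)" for A
    using set_integral_norm_lam_drift_le[OF assms that] .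
qed

end

theorem lemma4:
  fixes M :: "'w measure" and N :: "'b measure" and \<Xi> :: "'b set"
    and \<xi> :: "'w \<Rightarrow> 'b" and xi :: "nat \<Rightarrow> 'w \<Rightarrow> 'b"
    and C :: "(real^'n) set"
    and F :: "real^'n \<Rightarrow> 'b \<Rightarrow> real"
    and G :: "real^'n \<Rightarrow> 'b \<Rightarrow> real^'m"
    and v0 :: "real^'n \<Rightarrow> 'b \<Rightarrow> real^'n"
    and v :: "'m \<Rightarrow> real^'n \<Rightarrow> 'b \<Rightarrow> real^'n"
    and \<sigma> \<alpha> R \<nu>g \<kappa>f \<kappa>g \<epsilon>0 :: real
    and x0 :: "real^'n" and xhat :: "real^'n"
    and x :: "nat \<Rightarrow> 'w \<Rightarrow> real^'n" and lam :: "nat \<Rightarrow> 'w \<Rightarrow> real^'m"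
    and s :: nat
  assumes P: "prob_space M"
    \<comment> \<open>the random vector and its i.i.d. copies, supported on Xi\<close>
    and \<xi>_meas: "\<xi> \<in> measurable M N"
    and xi_meas: "\<And>k. xi k \<in> measurable M N"
    and xi_indep: "prob_space.indep_vars M (\<lambda>_. N) xi UNIV"
    and xi_distr: "\<And>k. distr M N (xi k) = distr M N \<xi>"
    and \<xi>_in: "\<And>\<omega>. \<omega> \<in> space M \<Longrightarrow> \<xi> \<omega> \<in> \<Xi>"
    and xi_in: "\<And>k \<omega>. \<omega> \<in> space M \<Longrightarrow> xi k \<omega> \<in> \<Xi>"
    \<comment> \<open>the feasible set\<close>
    and C_ne: "C \<noteq> {}" and C_compact: "compact C" and C_convex: "convex C"
    \<comment> \<open>convexity, continuity, measurability of F and G\<close>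
    and F_convex: "\<And>z. z \<in> \<Xi> \<Longrightarrow> convex_on C (\<lambda>y. F y z)"
    and F_cont: "\<And>z. z \<in> \<Xi> \<Longrightarrow> continuous_on C (\<lambda>y. F y z)"
    and G_convex: "\<And>z i. z \<in> \<Xi> \<Longrightarrow> convex_on C (\<lambda>y. G y z $ i)"
    and G_cont: "\<And>z i. z \<in> \<Xi> \<Longrightarrow> continuous_on C (\<lambda>y. G y z $ i)"
    and F_meas: "(\<lambda>(y, z). F y z) \<in> borel_measurable (borel \<Otimes>\<^sub>M N)"
    and G_meas: "(\<lambda>(y, z). G y z) \<in> borel_measurable (borel \<Otimes>\<^sub>M N)"
    and f_finite: "\<And>y. y \<in> C \<Longrightarrow> integrable M (\<lambda>\<omega>. F y (\<xi> \<omega>))"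
    and g_finite: "\<And>y i. y \<in> C \<Longrightarrow> integrable M (\<lambda>\<omega>. G y (\<xi> \<omega>) $ i)"
    \<comment> \<open>stochastic subgradients\<close>
    and v0_sub: "\<And>y z. y \<in> C \<Longrightarrow> z \<in> \<Xi> \<Longrightarrow> v0 y z \<in> subdiff_on C (\<lambda>u. F u z) y"
    and v_sub: "\<And>i y z. y \<in> C \<Longrightarrow> z \<in> \<Xi> \<Longrightarrow> v i y z \<in> subdiff_on C (\<lambda>u. G u z $ i) y"
    and v0_meas: "(\<lambda>(y, z). v0 y z) \<in> borel_measurable (borel \<Otimes>\<^sub>M N)"
    and v_meas: "\<And>i. (\<lambda>(y, z). v i y z) \<in> borel_measurable (borel \<Otimes>\<^sub>M N)"
    \<comment> \<open>(A1)-(A4)\<close>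
    and A1: "\<And>y y'. y \<in> C \<Longrightarrow> y' \<in> C \<Longrightarrow> norm (y - y') \<le> R"
    and A2: "\<And>y z. y \<in> C \<Longrightarrow> z \<in> \<Xi> \<Longrightarrow> norm (G y z) \<le> \<nu>g"
    and A3f: "\<And>y z. y \<in> C \<Longrightarrow> z \<in> \<Xi> \<Longrightarrow> norm (v0 y z) \<le> \<kappa>f"
    and A3g: "\<And>i y z. y \<in> C \<Longrightarrow> z \<in> \<Xi> \<Longrightarrow> norm (v i y z) \<le> \<kappa>g"
    and A4: "\<epsilon>0 > 0" "xhat \<in> C"
      "\<And>i. prob_space.expectation M (\<lambda>\<omega>. G xhat (\<xi> \<omega>) $ i) \<le> - \<epsilon>0"
    \<comment> \<open>SLPMM iteration\<close>
    and \<sigma>_pos: "\<sigma> > 0" and \<alpha>_pos: "\<alpha> > 0"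
    and x0_in: "x0 \<in> C"
    and x_init: "\<And>\<omega>. \<omega> \<in> space M \<Longrightarrow> x 0 \<omega> = x0"
    and lam_init: "\<And>\<omega>. \<omega> \<in> space M \<Longrightarrow> lam 0 \<omega> = 0"
    and x_step_in: "\<And>k \<omega>. \<omega> \<in> space M \<Longrightarrow> x (Suc k) \<omega> \<in> C"
    and x_step_min: "\<And>k \<omega> y. \<omega> \<in> space M \<Longrightarrow> y \<in> C \<Longrightarrow>
        slpmm_L \<sigma> (x k \<omega>) (F (x k \<omega>) (xi k \<omega>)) (G (x k \<omega>) (xi k \<omega>))
                (v0 (x k \<omega>) (xi k \<omega>)) (\<lambda>i. v i (x k \<omega>) (xi k \<omega>)) (x (Suc k) \<omega>) (lam k \<omega>)
          + \<alpha> / 2 * (norm (x (Suc k) \<omega> - x k \<omega>))\<^sup>2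
        \<le> slpmm_L \<sigma> (x k \<omega>) (F (x k \<omega>) (xi k \<omega>)) (G (x k \<omega>) (xi k \<omega>))
                (v0 (x k \<omega>) (xi k \<omega>)) (\<lambda>i. v i (x k \<omega>) (xi k \<omega>)) y (lam k \<omega>)
          + \<alpha> / 2 * (norm (y - x k \<omega>))\<^sup>2"
    and lam_step: "\<And>k \<omega>. \<omega> \<in> space M \<Longrightarrow>
        lam (Suc k) \<omega> = (\<chi> i. pos (lam k \<omega> $ i + \<sigma> * (G (x k \<omega>) (xi k \<omega>) $ i
                     + inner (v i (x k \<omega>) (xi k \<omega>)) (x (Suc k) \<omega> - x k \<omega>))))"
    \<comment> \<open>technical: the iterates are adapted to the filtration\<close>
    and x_adapted: "\<And>k. x k \<in> borel_measurable (gen_filtration M N xi k)"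
    and s_pos: "s > 0"
  shows
    "let p = real CARD('m);
         \<beta>0 = \<nu>g + sqrt p * \<kappa>g * R;
         thr = \<epsilon>0 * \<sigma> * real s / 2 + \<sigma> * \<beta>0 * (real s - 1) + \<alpha> * R\<^sup>2 / (\<epsilon>0 * real s)
             + 2 * \<kappa>f * R / \<epsilon>0 + \<sigma> * \<nu>g\<^sup>2 / \<epsilon>0
     in (\<forall>k. \<forall>\<omega>\<in>space M. \<bar>norm (lam (Suc k) \<omega>) - norm (lam k \<omega>)\<bar> \<le> \<sigma> * \<beta>0)
      \<and> (\<forall>k. AE \<omega> in M.
            real_cond_exp M (gen_filtration M N xi k)
               (\<lambda>\<omega>'. norm (lam (k + s) \<omega>') - norm (lam k \<omega>')) \<omega>
            \<le> (if norm (lam k \<omega>) < thr then real s * \<sigma> * \<beta>0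
                else - real s * (\<sigma> * \<epsilon>0 / 2)))"
proof -
  interpret slpmm M N \<Xi> \<xi> xi C F G v0 v \<sigma> \<alpha> R \<nu>g \<kappa>f \<kappa>g \<epsilon>0 x0 xhat x lam
  proof (intro slpmm.intro slpmm_axioms.intro)
    show "lam (Suc k) \<omega> = slpmm_update \<sigma> (x k \<omega>) (G (x k \<omega>) (xi k \<omega>))
        (\<lambda>i. v i (x k \<omega>) (xi k \<omega>)) (x (Suc k) \<omega>) (lam k \<omega>)" if "\<omega> \<in> space M" for k \<omega>
      using lam_step[OF that] by (simp add: slpmm_update_def)
  qed (fact assms)+
  show ?thesis
    unfolding Let_def \<beta>0_def[symmetric] threshold_def[symmetric]
    using abs_norm_lam_Suc_diff_le cond_exp_norm_lam_drift_le[OF s_pos] by (auto simp: drift_bound_def)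
qed

end
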